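(* Let $S \cdot I$ be a well-formed instrumented notebook state and let $op$ be any notebook operation ($\textsc{Run}(i)$, $\textsc{Edit}(i,c)$, $\textsc{Insert}(i,c)$, $\textsc{Delete}(i)$ or $\textsc{Move}(s,d)$). If $S \cdot I \xRightarrow{op} S' \cdot I'$ is a transition of the instrumented semantics, then $S' \cdot I'$ is well-formed.
   Context: Locations and stores. $\mathrm{Loc}$ is a set of locations (top-level variable names $x$, and DataFrame columns $d.c$ where $d$ is an immutable DataFrame address and $c$ a column name). $\mathrm{Val}$ is a set of values. A store is a map $\Sigma : \mathrm{Loc} \to \mathrm{Val}$, and $\emptyset$ denotes the empty store. $\mathit{Code}$ and $\mathit{Output}$ are unspecified sets; the output $\bot$ means "not yet executed". Cell evaluation. Standard cell evaluation is a given relation (a black box modelling the language runtime) written $c;\Sigma \Downarrow o \cdot \Sigma'$: executing code $c$ in store $\Sigma$ produces output $o$ and resulting store $\Sigma'$. Instrumented cell evaluation $c;\Sigma \Downarrow o \cdot \Sigma' \cdot r \cdot w$ extends it: it holds when $c;\Sigma \Downarrow o\cdot\Sigma'$, $r \subseteq \mathrm{Loc}$ is the set of locations of $\Sigma$ read during the evaluation of $c$, and $w \subseteq \mathrm{Loc}$ is the set of locations where $\Sigma'$ is updated from $\Sigma$. Notation. For a sequence $X = X_1,\dots,X_n$, $X_{i..j}$ is the subsequence $X_i,\dots,X_j$, and $X[i:=v]$ is $X$ with position $i$ replaced by $v$. For a sequence of sets $W$, $\bigcup W_{i..j} = W_i \cup \dots \cup W_j$ (empty if $i>j$). Notebook states.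 A notebook state is $S = (C, O, \Sigma)$ with $C = C_1,\dots,C_n$ cell codes, $O = O_1,\dots,O_n$ cell outputs, and $\Sigma$ the current store. An instrumentation is $I = (T, R, W)$ with tags $T_i \in \{\textsc{clean}, \textsc{stale}\}$, read sets $R_i \subseteq \mathrm{Loc}$ and write sets $W_i \subseteq \mathrm{Loc}$ for $i = 1,\dots,n$. Rerun consistency. $R$ and $W$ are rerun consistent for cell $i$ if all of: (NoReadAndWrite) $R_i \cap W_i = \emptyset$; (WriteAboveRead) $R_i \subseteq \bigcup W_{1..i-1}$; (NoReadAboveWrite) $R_i \cap \bigcup W_{i+1..n} = \emptyset$; (NoWriteBelowRead) $W_i \cap \bigcup R_{1..i-1} = \emptyset$. Staleness predicates. $\textsc{ForwardStale}(R,W,W',i,j)$ holds iff $j > i$ and $(W_i \cup W'_i) \cap (R_j \cup W_j) \neq \emptyset$. $\textsc{LastWriter}(W,i,\ell) = \max\{k < i \mid \ell \in W_k\}$. $\textsc{BackwardStale}(W,W',i,j)$ holds iff $j < i$ and $j = \textsc{LastWriter}(W,i,\ell)$ for some $\ell \in W_i \setminus W'_i$. Instrumented semantics $S\cdot I \xRightarrow{op} S'\cdot I'$: - $\textsc{Run}(i)$: if $S = (C,O,\Sigma)$, $C_i;\Sigma \Downarrow o\cdot\Sigma'\cdot r\cdot w$, $R' = R[i:=r]$, $W' = W[i:=w]$, and $R',W'$ are rerun consistent for $i$, then $(C,O,\Sigma)\cdot(T,R,W) \xRightarrow{\textsc{Run}(i)} (C, O[i:=o], \Sigma')\cdot(T',R',W')$,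 where $T'_j = \textsc{clean}$ if $j = i$; $T'_j = \textsc{stale}$ if $\textsc{ForwardStale}(R,W,W',i,j)$ or $\textsc{BackwardStale}(W,W',i,j)$; and $T'_j = T_j$ otherwise. - $\textsc{Edit}(i,c)$: $C$ becomes $C[i:=c]$; $O$, $\Sigma$, $R$, $W$ unchanged; $T$ becomes $T[i:=\textsc{stale}]$. - $\textsc{Insert}(i,c)$: $C' = C_{1..i-1}, c, C_{i..n}$; $O' = O_{1..i-1}, \bot, O_{i..n}$; $\Sigma$ unchanged; $R' = R_{1..i-1},\emptyset,R_{i..n}$; $W' = W_{1..i-1},\emptyset,W_{i..n}$; $T' = T_{1..i-1},\textsc{stale},T_{i..n}$. - $\textsc{Delete}(i)$: $C' = C_{1..i-1},C_{i+1..n}$; $O' = O_{1..i-1},O_{i+1..n}$; $\Sigma$ unchanged; with $R'' = R[i:=\emptyset]$, $W'' = W[i:=\emptyset]$, let $T''_j = \textsc{stale}$ if $\textsc{ForwardStale}(R,W,W'',i,j)$ or $\textsc{BackwardStale}(W,W'',i,j)$, and $T''_j = T_j$ otherwise; then $R' = R''_{1..i-1},R''_{i+1..n}$, $W' = W''_{1..i-1},W''_{i+1..n}$, $T' = T''_{1..i-1},T''_{i+1..n}$. - $\textsc{Move}(s,d)$: if $s < d$, it is $\textsc{Delete}(s)$ followed by $\textsc{Insert}(d-1, C_s)$; if $s > d$, it is $\textsc{Delete}(s)$ followed by $\textsc{Insert}(d, C_s)$. Well-formedness. $S\cdot I = (C,O,\Sigma)\cdot(T,R,W)$ is well-formed if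 for every $i$ with $T_i = \textsc{clean}$ there exists a store $\Sigma'$ such that (1) $C_i;\Sigma \Downarrow O_i\cdot\Sigma'\cdot R_i\cdot W_i$; (2) $\Sigma$ and $\Sigma'$ agree on every location not in $\bigcup W_{i+1..n}$; (3) $R$ and $W$ are rerun consistent for $i$. *)

theory Defs
  imports Main
begin

text \<open>Locations 'l, values 'v, code 'c, outputs 'o are type parameters.
  Stores are total maps 'l => 'v. Sequences are lists, accessed 1-based
  (position i of the paper is list index i - 1).\<close>

datatype tag = Clean | Stale

type_synonym ('l, 'v) store = "'l \<Rightarrow> 'v"
type_synonym ('c, 'o, 'l, 'v) nbstate = "'c list \<times> 'o list \<times> ('l, 'v) store"
type_synonym 'l instr = "tag list \<times> 'l set list \<times> 'l set list"

datatype 'c nbop = Run nat | Edit nat 'c | Insert nat 'c | Delete nat | Move nat nat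

definition nth1 :: "'a list \<Rightarrow> nat \<Rightarrow> 'a" where
  "nth1 xs i = xs ! (i - 1)"

definition upd1 :: "'a list \<Rightarrow> nat \<Rightarrow> 'a \<Rightarrow> 'a list" where
  "upd1 xs i v = xs[i - 1 := v]"

definition ins1 :: "'a list \<Rightarrow> nat \<Rightarrow> 'a \<Rightarrow> 'a list" where
  "ins1 xs i v = take (i - 1) xs @ v # drop (i - 1) xs"

definition del1 :: "'a list \<Rightarrow> nat \<Rightarrow> 'a list" where
  "del1 xs i = take (i - 1) xs @ drop i xs"

definition Un_range :: "'l set list \<Rightarrow> nat \<Rightarrow> nat \<Rightarrow> 'l set" where
  "Un_range W i j = \<Union> {nth1 W k | k. i \<le> k \<and> k \<le> j}"

text \<open>eval c s out s' is the black-box standard evaluation c; s \<Down> o . s'.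
  ieval c s out s' r w is instrumented evaluation c; s \<Down> o . s' . r . w.
  Since "the set of locations read" is not determined by the black box,
  ieval is a parameter subject to the following requirements: it extends
  eval; w contains every location updated; and r is a genuine read set:
  evaluating in any store agreeing with s on r reads and writes the same
  locations, gives the same output and writes the same values.\<close>

definition instrumented_eval ::
  "('c \<Rightarrow> ('l, 'v) store \<Rightarrow> 'o \<Rightarrow> ('l, 'v) store \<Rightarrow> bool) \<Rightarrow>
   ('c \<Rightarrow> ('l, 'v) store \<Rightarrow> 'o \<Rightarrow> ('l, 'v) store \<Rightarrow> 'l set \<Rightarrow> 'l set \<Rightarrow> bool) \<Rightarrow> bool" where
  "instrumented_eval eval ieval \<longleftrightarrow>
     (\<forall>c s out s' r w. ieval c s out s' r w \<longrightarrow> eval c s out s') \<and>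
     (\<forall>c s out s' r w. ieval c s out s' r w \<longrightarrow> (\<forall>l. l \<notin> w \<longrightarrow> s' l = s l)) \<and>
     (\<forall>c s1 out s1' r w s2. ieval c s1 out s1' r w \<longrightarrow> (\<forall>l\<in>r. s2 l = s1 l) \<longrightarrow>
        ieval c s2 out (\<lambda>l. if l \<in> w then s1' l else s2 l) r w)"

definition rerun_consistent :: "'l set list \<Rightarrow> 'l set list \<Rightarrow> nat \<Rightarrow> bool" where
  "rerun_consistent R W i \<longleftrightarrow>
     (let n = length W in
       nth1 R i \<inter> nth1 W i = {} \<and>
       nth1 R i \<subseteq> Un_range W 1 (i - 1) \<and>
       nth1 R i \<inter> Un_range W (i + 1) n = {} \<and>
       nth1 W i \<inter> Un_range R 1 (i - 1) = {})"

definition forward_stale ::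
  "'l set list \<Rightarrow> 'l set list \<Rightarrow> 'l set list \<Rightarrow> nat \<Rightarrow> nat \<Rightarrow> bool" where
  "forward_stale R W W' i j \<longleftrightarrow>
     j > i \<and> (nth1 W i \<union> nth1 W' i) \<inter> (nth1 R j \<union> nth1 W j) \<noteq> {}"

definition last_writer :: "'l set list \<Rightarrow> nat \<Rightarrow> 'l \<Rightarrow> nat" where
  "last_writer W i l = Max {k. 1 \<le> k \<and> k < i \<and> l \<in> nth1 W k}"

text \<open>j = LastWriter(W,i,l) is only meaningful when some cell above i writes l.\<close>
definition backward_stale :: "'l set list \<Rightarrow> 'l set list \<Rightarrow> nat \<Rightarrow> nat \<Rightarrow> bool" where
  "backward_stale W W' i j \<longleftrightarrow>
     j < i \<and> (\<exists>l \<in> nth1 W i - nth1 W' i.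
        {k. 1 \<le> k \<and> k < i \<and> l \<in> nth1 W k} \<noteq> {} \<and> j = last_writer W i l)"

definition retag :: "tag list \<Rightarrow> 'l set list \<Rightarrow> 'l set list \<Rightarrow> 'l set list \<Rightarrow> nat \<Rightarrow> tag list" where
  "retag T R W W' i =
     map (\<lambda>j. if forward_stale R W W' i j \<or> backward_stale W W' i j then Stale else nth1 T j)
         [1..<length T + 1]"

inductive nb_step ::
  "('c \<Rightarrow> ('l, 'v) store \<Rightarrow> 'o \<Rightarrow> ('l, 'v) store \<Rightarrow> 'l set \<Rightarrow> 'l set \<Rightarrow> bool) \<Rightarrow> 'o \<Rightarrow>
   'c nbop \<Rightarrow> ('c, 'o, 'l, 'v) nbstate \<Rightarrow> 'l instr \<Rightarrow>
   ('c, 'o, 'l, 'v) nbstate \<Rightarrow> 'l instr \<Rightarrow> bool"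
  for ieval bot where
  step_run:
    "\<lbrakk> 1 \<le> i; i \<le> length C;
       ieval (nth1 C i) \<Sigma> out \<Sigma>' r w;
       R' = upd1 R i r; W' = upd1 W i w;
       rerun_consistent R' W' i;
       T' = upd1 (retag T R W W' i) i Clean \<rbrakk>
     \<Longrightarrow> nb_step ieval bot (Run i) (C, Out, \<Sigma>) (T, R, W) (C, upd1 Out i out, \<Sigma>') (T', R', W')"
| step_edit:
    "\<lbrakk> 1 \<le> i; i \<le> length C \<rbrakk>
     \<Longrightarrow> nb_step ieval bot (Edit i c) (C, Out, \<Sigma>) (T, R, W)
           (upd1 C i c, Out, \<Sigma>) (upd1 T i Stale, R, W)"
| step_insert:
    "\<lbrakk> 1 \<le> i; i \<le> length C + 1 \<rbrakk>
     \<Longrightarrow> nb_step ieval bot (Insert i c) (C, Out, \<Sigma>) (T, R, W)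
           (ins1 C i c, ins1 Out i bot, \<Sigma>) (ins1 T i Stale, ins1 R i {}, ins1 W i {})"
| step_delete:
    "\<lbrakk> 1 \<le> i; i \<le> length C;
       R'' = upd1 R i {}; W'' = upd1 W i {};
       T'' = retag T R W W'' i \<rbrakk>
     \<Longrightarrow> nb_step ieval bot (Delete i) (C, Out, \<Sigma>) (T, R, W)
           (del1 C i, del1 Out i, \<Sigma>) (del1 T'' i, del1 R'' i, del1 W'' i)"
| step_move_down:
    "\<lbrakk> s < d;
       nb_step ieval bot (Delete s) (C, Out, \<Sigma>) I S1 I1;
       nb_step ieval bot (Insert (d - 1) (nth1 C s)) S1 I1 S2 I2 \<rbrakk>
     \<Longrightarrow> nb_step ieval bot (Move s d) (C, Out, \<Sigma>) I S2 I2"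
| step_move_up:
    "\<lbrakk> s > d;
       nb_step ieval bot (Delete s) (C, Out, \<Sigma>) I S1 I1;
       nb_step ieval bot (Insert d (nth1 C s)) S1 I1 S2 I2 \<rbrakk>
     \<Longrightarrow> nb_step ieval bot (Move s d) (C, Out, \<Sigma>) I S2 I2"

text \<open>Includes the implicit structural requirement that all sequences have length n.\<close>
definition well_formed ::
  "('c \<Rightarrow> ('l, 'v) store \<Rightarrow> 'o \<Rightarrow> ('l, 'v) store \<Rightarrow> 'l set \<Rightarrow> 'l set \<Rightarrow> bool) \<Rightarrow>
   ('c, 'o, 'l, 'v) nbstate \<Rightarrow> 'l instr \<Rightarrow> bool" where
  "well_formed ieval S I \<longleftrightarrow>
     (case S of (C, Out, \<Sigma>) \<Rightarrow> case I of (T, R, W) \<Rightarrow>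
       let n = length C in
       length Out = n \<and> length T = n \<and> length R = n \<and> length W = n \<and>
       (\<forall>i. 1 \<le> i \<and> i \<le> n \<and> nth1 T i = Clean \<longrightarrow>
          (\<exists>\<Sigma>'. ieval (nth1 C i) \<Sigma> (nth1 Out i) \<Sigma>' (nth1 R i) (nth1 W i) \<and>
                 (\<forall>l. l \<notin> Un_range W (i + 1) n \<longrightarrow> \<Sigma> l = \<Sigma>' l) \<and>
                 rerun_consistent R W i)))"

end

(*
  Well-formedness constrains every clean cell separately (cell_wf), so it suffices to follow one
  clean cell j through each operation. Edit only makes a cell stale, and inserting or removing a
  cell with empty read and write sets just renumbers the other cells without changing the unions
  of read and write sets that well-formedness refers to.

  Run(i) changes the store only on the new write set w of cell i. If j stays clean, it is neither
  forward nor backward stale. Then no read of j lies in w (by forward staleness if j > i, by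
  NoWriteBelowRead for i if j < i), so j re-evaluates in the new store with the same output and
  the same read and write sets. A location written by j and by no later cell is not in w, and if
  j < i it was not written by i before the run either, since j would then be its last writer and
  hence backward stale; so the re-evaluated store agrees with the new one there. Delete(i) is the same argument with empty read
  and write sets, followed by removing the now empty cell i.
*)
theory Submission
  imports Defs
begin

definition ins_pos :: "nat \<Rightarrow> nat \<Rightarrow> nat" where
  "ins_pos i j = (if j < i then j else Suc j)"

lemma ins_pos_eq_iff [simp]: "ins_pos i a = ins_pos i b \<longleftrightarrow> a = b"
  by (auto simp: ins_pos_def)

lemma ins_pos_neq [simp]: "ins_pos i j \<noteq> i" "i \<noteq> ins_pos i j"
  by (auto simp: ins_pos_def)

lemma ins_pos_cases:
  assumes "1 \<le> i" "i \<le> n + 1" "1 \<le> k" "k \<le> n + 1" "k \<noteq> i"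
  obtains j where "k = ins_pos i j" "1 \<le> j" "j \<le> n"
proof (cases "k < i")
  case True
  then show ?thesis using that[of k] assms by (simp add: ins_pos_def)
next
  case False
  then show ?thesis using that[of "k - 1"] assms by (simp add: ins_pos_def)
qed

lemma length_ins1 [simp]: "length (ins1 xs i v) = length xs + 1"
  by (simp add: ins1_def)

lemma length_upd1 [simp]: "length (upd1 xs i v) = length xs"
  by (simp add: upd1_def)

lemma length_del1 [simp]: "1 \<le> i \<Longrightarrow> i \<le> length xs \<Longrightarrow> length (del1 xs i) = length xs - 1"
  by (simp add: del1_def)

lemma length_retag [simp]: "length (retag T R W W' i) = length T"
  by (simp add: retag_def del: upt_Suc)

lemma nth1_upd1:
  "1 \<le> i \<Longrightarrow> i \<le> length xs \<Longrightarrow> 1 \<le> j \<Longrightarrow> nth1 (upd1 xs i v) j = (if j = i then v else nth1 xs j)"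
  by (auto simp: nth1_def upd1_def nth_list_update)

lemma nth1_ins1_same: "1 \<le> i \<Longrightarrow> i \<le> length xs + 1 \<Longrightarrow> nth1 (ins1 xs i v) i = v"
  by (simp add: nth1_def ins1_def nth_append)

lemma nth1_ins1_ins_pos:
  "1 \<le> j \<Longrightarrow> j \<le> length xs \<Longrightarrow> i \<le> length xs + 1 \<Longrightarrow> nth1 (ins1 xs i v) (ins_pos i j) = nth1 xs j"
  by (auto simp: nth1_def ins1_def ins_pos_def nth_append min_def)

lemma ins1_del1:
  assumes "1 \<le> i" "i \<le> length xs"
  shows "ins1 (del1 xs i) i (nth1 xs i) = xs"
proof -
  have "xs = take (i - 1) xs @ xs ! (i - 1) # drop i xs"
    using assms id_take_nth_drop[of "i - 1" xs] by simp
  then show ?thesis using assms by (simp add: ins1_def del1_def nth1_def min_def drop_take)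
qed

lemma nth1_retag:
  "1 \<le> j \<Longrightarrow> j \<le> length T \<Longrightarrow> nth1 (retag T R W W' i) j =
     (if forward_stale R W W' i j \<or> backward_stale W W' i j then Stale else nth1 T j)"
  by (simp add: retag_def nth1_def del: upt_Suc)

lemma in_Un_range: "l \<in> Un_range W a b \<longleftrightarrow> (\<exists>k. a \<le> k \<and> k \<le> b \<and> l \<in> nth1 W k)"
  by (auto simp: Un_range_def)

lemma Un_range_upd1_outside:
  assumes "1 \<le> i" "i \<le> length W" "1 \<le> a" "i < a \<or> b < i"
  shows "Un_range (upd1 W i X) a b = Un_range W a b"
proof -
  have "nth1 (upd1 W i X) k = nth1 W k" if "a \<le> k" "k \<le> b" for k
    using assms that by (auto simp: nth1_upd1)
  then show ?thesis by (intro set_eqI) (auto simp: in_Un_range)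
qed

lemma in_nth1_ins1_empty:
  assumes "1 \<le> i" "i \<le> length W + 1" "1 \<le> k'" "k' \<le> length W + 1"
  shows "l \<in> nth1 (ins1 W i {}) k' \<longleftrightarrow> (\<exists>k. 1 \<le> k \<and> k \<le> length W \<and> k' = ins_pos i k \<and> l \<in> nth1 W k)"
proof (cases "k' = i")
  case True
  then show ?thesis using assms by (auto simp: nth1_ins1_same)
next
  case False
  obtain k where "k' = ins_pos i k" "1 \<le> k" "k \<le> length W"
    by (rule ins_pos_cases[OF assms False])
  with assms show ?thesis by (auto simp: nth1_ins1_ins_pos)
qed

lemma in_Un_range_ins1_empty:
  assumes "1 \<le> i" "i \<le> length W + 1" "1 \<le> a" "b \<le> length W + 1"
  shows "l \<in> Un_range (ins1 W i {}) a b \<longleftrightarrow>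
    (\<exists>k. 1 \<le> k \<and> k \<le> length W \<and> a \<le> ins_pos i k \<and> ins_pos i k \<le> b \<and> l \<in> nth1 W k)"
proof -
  have "l \<in> nth1 (ins1 W i {}) k' \<longleftrightarrow> (\<exists>k. 1 \<le> k \<and> k \<le> length W \<and> k' = ins_pos i k \<and> l \<in> nth1 W k)"
    if "a \<le> k'" "k' \<le> b" for k'
    using assms that by (intro in_nth1_ins1_empty) auto
  then show ?thesis unfolding in_Un_range by blast
qed

lemma Un_range_ins1_empty_above:
  assumes "1 \<le> i" "i \<le> length W + 1" "j \<le> length W"
  shows "Un_range (ins1 W i {}) (ins_pos i j + 1) (length W + 1) = Un_range W (j + 1) (length W)"
proof (rule set_eqI)
  fix l
  have "l \<in> Un_range (ins1 W i {}) (ins_pos i j + 1) (length W + 1) \<longleftrightarrow>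
      (\<exists>k. 1 \<le> k \<and> k \<le> length W \<and> ins_pos i j + 1 \<le> ins_pos i k \<and>
        ins_pos i k \<le> length W + 1 \<and> l \<in> nth1 W k)"
    using assms by (intro in_Un_range_ins1_empty) auto
  also have "\<dots> \<longleftrightarrow> (\<exists>k. j + 1 \<le> k \<and> k \<le> length W \<and> l \<in> nth1 W k)"
  proof -
    have "1 \<le> k \<and> k \<le> length W \<and> ins_pos i j + 1 \<le> ins_pos i k \<and> ins_pos i k \<le> length W + 1 \<longleftrightarrow>
        j + 1 \<le> k \<and> k \<le> length W" for k
      using assms by (auto simp: ins_pos_def)
    then show ?thesis by blast
  qed
  finally show "l \<in> Un_range (ins1 W i {}) (ins_pos i j + 1) (length W + 1) \<longleftrightarrow>
      l \<in> Un_range W (j + 1) (length W)"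
    by (simp add: in_Un_range)
qed

lemma Un_range_ins1_empty_below:
  assumes "1 \<le> i" "i \<le> length W + 1" "1 \<le> j" "j \<le> length W"
  shows "Un_range (ins1 W i {}) 1 (ins_pos i j - 1) = Un_range W 1 (j - 1)"
proof (rule set_eqI)
  fix l
  have "l \<in> Un_range (ins1 W i {}) 1 (ins_pos i j - 1) \<longleftrightarrow>
      (\<exists>k. 1 \<le> k \<and> k \<le> length W \<and> 1 \<le> ins_pos i k \<and> ins_pos i k \<le> ins_pos i j - 1 \<and> l \<in> nth1 W k)"
    using assms by (intro in_Un_range_ins1_empty) (auto simp: ins_pos_def)
  also have "\<dots> \<longleftrightarrow> (\<exists>k. 1 \<le> k \<and> k \<le> j - 1 \<and> l \<in> nth1 W k)"
  proof -
    have "1 \<le> k \<and> k \<le> length W \<and> 1 \<le> ins_pos i k \<and> ins_pos i k \<le> ins_pos i j - 1 \<longleftrightarrow>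
        1 \<le> k \<and> k \<le> j - 1" for k
      using assms by (auto simp: ins_pos_def)
    then show ?thesis by blast
  qed
  finally show "l \<in> Un_range (ins1 W i {}) 1 (ins_pos i j - 1) \<longleftrightarrow> l \<in> Un_range W 1 (j - 1)"
    by (simp add: in_Un_range)
qed

lemma instrumented_eval_frame:
  "instrumented_eval eval ieval \<Longrightarrow> ieval c s out s' r w \<Longrightarrow> l \<notin> w \<Longrightarrow> s' l = s l"
  unfolding instrumented_eval_def by blast

lemma instrumented_eval_reuse:
  assumes "instrumented_eval eval ieval" "ieval c s out s' r w" "\<And>l. l \<in> r \<Longrightarrow> t l = s l"
  shows "ieval c t out (\<lambda>l. if l \<in> w then s' l else t l) r w"
proof -
  from assms(1) have "\<forall>c s out s' r w t. ieval c s out s' r w \<longrightarrow> (\<forall>l\<in>r. t l = s l) \<longrightarrow>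
      ieval c t out (\<lambda>l. if l \<in> w then s' l else t l) r w"
    unfolding instrumented_eval_def by (elim conjE)
  from this[rule_format, OF assms(2,3)] show ?thesis .
qed

definition cell_wf ::
  "('c \<Rightarrow> ('l, 'v) store \<Rightarrow> 'o \<Rightarrow> ('l, 'v) store \<Rightarrow> 'l set \<Rightarrow> 'l set \<Rightarrow> bool) \<Rightarrow>
   'c \<Rightarrow> 'o \<Rightarrow> ('l, 'v) store \<Rightarrow> 'l set list \<Rightarrow> 'l set list \<Rightarrow> nat \<Rightarrow> bool" where
  "cell_wf ieval c out \<Sigma> R W j \<longleftrightarrow>
     (\<exists>\<Sigma>'. ieval c \<Sigma> out \<Sigma>' (nth1 R j) (nth1 W j) \<and>
        (\<forall>l. l \<notin> Un_range W (j + 1) (length W) \<longrightarrow> \<Sigma> l = \<Sigma>' l) \<and>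
        rerun_consistent R W j)"

lemma well_formed_iff:
  "well_formed ieval (C, Out, \<Sigma>) (T, R, W) \<longleftrightarrow>
     length Out = length C \<and> length T = length C \<and> length R = length C \<and> length W = length C \<and>
     (\<forall>j. 1 \<le> j \<and> j \<le> length C \<and> nth1 T j = Clean \<longrightarrow> cell_wf ieval (nth1 C j) (nth1 Out j) \<Sigma> R W j)"
  by (auto simp: well_formed_def cell_wf_def Let_def)

lemma well_formedD:
  assumes "well_formed ieval (C, Out, \<Sigma>) (T, R, W)"
  shows "length Out = length C" "length T = length C" "length R = length C" "length W = length C"
    and "1 \<le> j \<Longrightarrow> j \<le> length C \<Longrightarrow> nth1 T j = Clean \<Longrightarrow> cell_wf ieval (nth1 C j) (nth1 Out j) \<Sigma> R W j"
  using assms by (auto simp: well_formed_iff)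

lemma cell_wf_ins1_empty_iff:
  assumes "1 \<le> i" "i \<le> length W + 1" "1 \<le> j" "j \<le> length W" "length R = length W"
  shows "cell_wf ieval c out \<Sigma> (ins1 R i {}) (ins1 W i {}) (ins_pos i j) \<longleftrightarrow>
    cell_wf ieval c out \<Sigma> R W j"
proof -
  have "nth1 (ins1 R i {}) (ins_pos i j) = nth1 R j" "nth1 (ins1 W i {}) (ins_pos i j) = nth1 W j"
    using assms by (simp_all add: nth1_ins1_ins_pos)
  moreover have
    "Un_range (ins1 W i {}) (ins_pos i j + 1) (length W + 1) = Un_range W (j + 1) (length W)"
    using assms by (intro Un_range_ins1_empty_above)
  moreover have "Un_range (ins1 W i {}) 1 (ins_pos i j - 1) = Un_range W 1 (j - 1)"
    using assms by (intro Un_range_ins1_empty_below)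
  moreover have "Un_range (ins1 R i {}) 1 (ins_pos i j - 1) = Un_range R 1 (j - 1)"
    using assms by (intro Un_range_ins1_empty_below) simp_all
  ultimately show ?thesis
    unfolding cell_wf_def rerun_consistent_def Let_def length_ins1 by (simp only:)
qed

lemma rerun_consistent_upd1:
  assumes rc: "rerun_consistent R W j"
    and "1 \<le> i" "i \<le> length W" "length R = length W" "1 \<le> j" "j \<noteq> i"
    and old_write_unread: "i < j \<Longrightarrow> nth1 W i \<inter> nth1 R j = {}"
    and new_read_unwritten: "i < j \<Longrightarrow> r \<inter> nth1 W j = {}"
    and new_write_unread: "j < i \<Longrightarrow> w \<inter> nth1 R j = {}"
  shows "rerun_consistent (upd1 R i r) (upd1 W i w) j"
proof -
  let ?R' = "upd1 R i r" and ?W' = "upd1 W i w" and ?n = "length W"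
  have R': "nth1 ?R' k = (if k = i then r else nth1 R k)" if "1 \<le> k" for k
    using assms that by (simp add: nth1_upd1)
  have W': "nth1 ?W' k = (if k = i then w else nth1 W k)" if "1 \<le> k" for k
    using assms that by (simp add: nth1_upd1)
  from rc have old: "nth1 R j \<inter> nth1 W j = {}" "nth1 R j \<subseteq> Un_range W 1 (j - 1)"
    "nth1 R j \<inter> Un_range W (j + 1) ?n = {}" "nth1 W j \<inter> Un_range R 1 (j - 1) = {}"
    unfolding rerun_consistent_def Let_def by auto
  have "nth1 R j \<subseteq> Un_range ?W' 1 (j - 1)"
  proof
    fix l assume l: "l \<in> nth1 R j"
    then obtain k where k: "1 \<le> k" "k \<le> j - 1" "l \<in> nth1 W k"
      using subsetD[OF old(2) l] by (auto simp: in_Un_range)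
    have "k \<noteq> i"
    proof
      assume "k = i"
      then have "i < j" using k by linarith
      then show False using old_write_unread k l \<open>k = i\<close> by blast
    qed
    then show "l \<in> Un_range ?W' 1 (j - 1)" using k W' by (auto simp: in_Un_range)
  qed
  moreover have "l \<notin> nth1 ?W' k" if l: "l \<in> nth1 R j" and k: "j + 1 \<le> k" "k \<le> ?n" for l k
  proof (cases "k = i")
    case True
    then show ?thesis using new_write_unread l k W' by auto
  next
    case False
    then show ?thesis using old(3) l k W' unfolding disjoint_iff in_Un_range by force
  qed
  then have "nth1 R j \<inter> Un_range ?W' (j + 1) ?n = {}" by (auto simp: in_Un_range)
  moreover have "l \<notin> nth1 ?R' k" if l: "l \<in> nth1 W j" and k: "1 \<le> k" "k \<le> j - 1" for l k
  proof (cases "k = i")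
    case True
    then have "i < j" using k by linarith
    then show ?thesis using new_read_unwritten l k R' \<open>k = i\<close> by auto
  next
    case False
    then show ?thesis using old(4) l k R' unfolding disjoint_iff in_Un_range by force
  qed
  then have "nth1 W j \<inter> Un_range ?R' 1 (j - 1) = {}" by (auto simp: in_Un_range)
  ultimately show ?thesis
    using old(1) R'[OF \<open>1 \<le> j\<close>] W'[OF \<open>1 \<le> j\<close>] \<open>j \<noteq> i\<close>
    unfolding rerun_consistent_def Let_def by simp
qed

lemma last_writer_eqI:
  assumes "1 \<le> j" "j < i" "l \<in> nth1 W j" "\<And>k. j < k \<Longrightarrow> k < i \<Longrightarrow> l \<notin> nth1 W k"
  shows "last_writer W i l = j"
  unfolding last_writer_def
proof (rule Max_eqI)
  show "finite {k. 1 \<le> k \<and> k < i \<and> l \<in> nth1 W k}" by simp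
  show "j \<in> {k. 1 \<le> k \<and> k < i \<and> l \<in> nth1 W k}" using assms by simp
  show "k \<le> j" if "k \<in> {k. 1 \<le> k \<and> k < i \<and> l \<in> nth1 W k}" for k
    using assms(4)[of k] that by force
qed

lemma backward_staleI:
  assumes "1 \<le> j" "j < i" "l \<in> nth1 W i" "l \<notin> nth1 W' i" "l \<in> nth1 W j"
    and "\<And>k. j < k \<Longrightarrow> k < i \<Longrightarrow> l \<notin> nth1 W k"
  shows "backward_stale W W' i j"
  unfolding backward_stale_def
  using assms last_writer_eqI[of j i l W] by blast

lemma not_in_Un_range_above_upd1:
  assumes "1 \<le> i" "i \<le> length W" "1 \<le> j" "j \<noteq> i"
    and not_fwd: "\<not> forward_stale R W (upd1 W i w) i j"
    and not_bwd: "\<not> backward_stale W (upd1 W i w) i j"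
    and l: "l \<in> nth1 W j" "l \<notin> Un_range (upd1 W i w) (j + 1) (length W)"
  shows "l \<notin> w \<and> l \<notin> Un_range W (j + 1) (length W)"
proof -
  have W': "nth1 (upd1 W i w) k = (if k = i then w else nth1 W k)" if "1 \<le> k" for k
    using assms that by (simp add: nth1_upd1)
  have unwritten: "l \<notin> nth1 (upd1 W i w) k" if "j < k" "k \<le> length W" for k
    using l(2) that by (auto simp: in_Un_range)
  show ?thesis
  proof (cases "i < j")
    case True
    then have "l \<notin> w" using not_fwd l(1) W'[OF \<open>1 \<le> i\<close>] by (auto simp: forward_stale_def)
    moreover have "l \<notin> nth1 W k" if "j < k" "k \<le> length W" for k
      using unwritten[OF that] W'[of k] that True by auto
    ultimately show ?thesis by (auto simp: in_Un_range)
  next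
    case False
    then have "j < i" using \<open>j \<noteq> i\<close> by linarith
    then have "l \<notin> w" using unwritten[of i] W'[OF \<open>1 \<le> i\<close>] assms(2) by auto
    have "l \<notin> nth1 W i"
    proof
      assume "l \<in> nth1 W i"
      have "backward_stale W (upd1 W i w) i j"
      proof (rule backward_staleI)
        show "l \<notin> nth1 (upd1 W i w) i" using \<open>l \<notin> w\<close> W'[OF \<open>1 \<le> i\<close>] by simp
        show "l \<notin> nth1 W k" if "j < k" "k < i" for k
          using unwritten[of k] W'[of k] that assms(2) by auto
      qed (use assms \<open>j < i\<close> \<open>l \<in> nth1 W i\<close> in auto)
      with not_bwd show False ..
    qed
    then have "l \<notin> nth1 W k" if "j < k" "k \<le> length W" for k
      using unwritten[OF that] W'[of k] that by (cases "k = i") auto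
    with \<open>l \<notin> w\<close> show ?thesis by (auto simp: in_Un_range)
  qed
qed

lemma cell_wf_upd1:
  assumes ie: "instrumented_eval eval ieval"
    and wf: "cell_wf ieval c out \<Sigma> R W j"
    and "1 \<le> i" "i \<le> length W" "length R = length W" "1 \<le> j" "j \<le> length W" "j \<noteq> i"
    and frame: "\<And>l. l \<notin> w \<Longrightarrow> \<Sigma>' l = \<Sigma> l"
    and read_above: "r \<inter> Un_range W (i + 1) (length W) = {}"
    and write_below: "w \<inter> Un_range R 1 (i - 1) = {}"
    and not_fwd: "\<not> forward_stale R W (upd1 W i w) i j"
    and not_bwd: "\<not> backward_stale W (upd1 W i w) i j"
  shows "cell_wf ieval c out \<Sigma>' (upd1 R i r) (upd1 W i w) j"
proof -
  obtain \<Sigma>j where ev: "ieval c \<Sigma> out \<Sigma>j (nth1 R j) (nth1 W j)"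
    and agree: "\<And>l. l \<notin> Un_range W (j + 1) (length W) \<Longrightarrow> \<Sigma> l = \<Sigma>j l"
    and rc: "rerun_consistent R W j"
    using wf unfolding cell_wf_def by blast
  have Rj: "nth1 (upd1 R i r) j = nth1 R j" and Wj: "nth1 (upd1 W i w) j = nth1 W j"
    using assms by (simp_all add: nth1_upd1)
  have fwd: "(nth1 W i \<union> w) \<inter> (nth1 R j \<union> nth1 W j) = {}" if "i < j"
    using not_fwd that assms by (simp add: forward_stale_def nth1_upd1)
  have below: "w \<inter> nth1 R j = {}" if "j < i"
    using write_below that \<open>1 \<le> j\<close> unfolding disjoint_iff in_Un_range by force
  have above: "r \<inter> nth1 W j = {}" if "i < j"
    using read_above that \<open>j \<le> length W\<close> unfolding disjoint_iff in_Un_range by force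
  have reads_kept: "\<Sigma>' l = \<Sigma> l" if "l \<in> nth1 R j" for l
  proof (rule frame)
    show "l \<notin> w"
      using fwd below that \<open>j \<noteq> i\<close> by (cases "i < j") auto
  qed
  define \<Sigma>j' where "\<Sigma>j' = (\<lambda>l. if l \<in> nth1 W j then \<Sigma>j l else \<Sigma>' l)"
  have "ieval c \<Sigma>' out \<Sigma>j' (nth1 R j) (nth1 W j)"
    unfolding \<Sigma>j'_def using instrumented_eval_reuse[OF ie, OF ev reads_kept] .
  moreover have "\<Sigma>' l = \<Sigma>j' l" if "l \<notin> Un_range (upd1 W i w) (j + 1) (length W)" for l
  proof (cases "l \<in> nth1 W j")
    case True
    with that have "l \<notin> w \<and> l \<notin> Un_range W (j + 1) (length W)"
      using \<open>1 \<le> i\<close> \<open>i \<le> length W\<close> \<open>1 \<le> j\<close> \<open>j \<noteq> i\<close> not_fwd not_bwd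
      by (intro not_in_Un_range_above_upd1)
    then show ?thesis using frame agree True by (simp add: \<Sigma>j'_def)
  qed (simp add: \<Sigma>j'_def)
  moreover have "rerun_consistent (upd1 R i r) (upd1 W i w) j"
    using rc \<open>1 \<le> i\<close> \<open>i \<le> length W\<close> \<open>length R = length W\<close> \<open>1 \<le> j\<close> \<open>j \<noteq> i\<close> fwd above below
    by (intro rerun_consistent_upd1) auto
  ultimately show ?thesis unfolding cell_wf_def Rj Wj length_upd1 by (intro exI[of _ \<Sigma>j']) blast
qed

lemma cell_wf_rerun:
  assumes ie: "instrumented_eval eval ieval"
    and ev: "ieval c \<Sigma> out \<Sigma>' (nth1 R i) (nth1 W i)"
    and rc: "rerun_consistent R W i"
  shows "cell_wf ieval c out \<Sigma>' R W i"
proof -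
  have disj: "nth1 R i \<inter> nth1 W i = {}" using rc by (simp add: rerun_consistent_def Let_def)
  have "\<Sigma>' l = \<Sigma> l" if "l \<in> nth1 R i" for l
    using disj that instrumented_eval_frame[OF ie, OF ev, of l] by blast
  from instrumented_eval_reuse[OF ie, OF ev this] have "ieval c \<Sigma>' out \<Sigma>' (nth1 R i) (nth1 W i)"
    by simp
  with rc show ?thesis unfolding cell_wf_def by (intro exI[of _ \<Sigma>']) blast
qed

lemma nth1_del1: "1 \<le> i \<Longrightarrow> i \<le> length xs \<Longrightarrow> 1 \<le> j \<Longrightarrow> nth1 (del1 xs i) j = nth1 xs (ins_pos i j)"
  by (auto simp: nth1_def del1_def ins_pos_def nth_append min_def)

lemma cell_wf_del1_iff:
  assumes "1 \<le> i" "i \<le> length W" "length R = length W" "nth1 R i = {}" "nth1 W i = {}"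
    and "1 \<le> j" "j < length W"
  shows "cell_wf ieval c out \<Sigma> (del1 R i) (del1 W i) j \<longleftrightarrow> cell_wf ieval c out \<Sigma> R W (ins_pos i j)"
proof -
  have "ins1 (del1 R i) i {} = R" "ins1 (del1 W i) i {} = W"
    using assms ins1_del1[of i R] ins1_del1[of i W] by simp_all
  moreover have "cell_wf ieval c out \<Sigma> (ins1 (del1 R i) i {}) (ins1 (del1 W i) i {}) (ins_pos i j) \<longleftrightarrow>
      cell_wf ieval c out \<Sigma> (del1 R i) (del1 W i) j"
    using assms by (intro cell_wf_ins1_empty_iff) auto
  ultimately show ?thesis by simp
qed

lemma well_formed_edit:
  assumes wf: "well_formed ieval (C, Out, \<Sigma>) (T, R, W)" and i: "1 \<le> i" "i \<le> length C"
  shows "well_formed ieval (upd1 C i c, Out, \<Sigma>) (upd1 T i Stale, R, W)"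
proof -
  note len = well_formedD(1-4)[OF wf] and clean = well_formedD(5)[OF wf]
  have "cell_wf ieval (nth1 (upd1 C i c) j) (nth1 Out j) \<Sigma> R W j"
    if j: "1 \<le> j" "j \<le> length C" and clean_j: "nth1 (upd1 T i Stale) j = Clean" for j
  proof -
    have "j \<noteq> i" using clean_j i len by (auto simp: nth1_upd1)
    then show ?thesis using clean_j i j len clean by (simp add: nth1_upd1)
  qed
  then show ?thesis using len by (simp add: well_formed_iff)
qed

lemma well_formed_insert:
  assumes wf: "well_formed ieval (C, Out, \<Sigma>) (T, R, W)" and i: "1 \<le> i" "i \<le> length C + 1"
  shows "well_formed ieval (ins1 C i c, ins1 Out i out_bot, \<Sigma>)
    (ins1 T i Stale, ins1 R i {}, ins1 W i {})"
proof -
  note len = well_formedD(1-4)[OF wf] and clean = well_formedD(5)[OF wf]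
  have "cell_wf ieval (nth1 (ins1 C i c) k) (nth1 (ins1 Out i out_bot) k) \<Sigma>
      (ins1 R i {}) (ins1 W i {}) k"
    if k: "1 \<le> k" "k \<le> length C + 1" and clean_k: "nth1 (ins1 T i Stale) k = Clean" for k
  proof -
    have "k \<noteq> i" using clean_k i len by (auto simp: nth1_ins1_same)
    then obtain j where j: "k = ins_pos i j" "1 \<le> j" "j \<le> length C"
      by (rule ins_pos_cases[OF i k])
    then have "cell_wf ieval (nth1 C j) (nth1 Out j) \<Sigma> R W j"
      using clean_k i len by (intro clean) (simp_all add: nth1_ins1_ins_pos)
    then show ?thesis
      using i j len by (simp add: nth1_ins1_ins_pos cell_wf_ins1_empty_iff)
  qed
  then show ?thesis using len by (simp add: well_formed_iff)
qed

lemma well_formed_delete: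
  assumes ie: "instrumented_eval eval ieval"
    and wf: "well_formed ieval (C, Out, \<Sigma>) (T, R, W)" and i: "1 \<le> i" "i \<le> length C"
  defines "R'' \<equiv> upd1 R i {}" and "W'' \<equiv> upd1 W i {}"
  shows "well_formed ieval (del1 C i, del1 Out i, \<Sigma>)
    (del1 (retag T R W W'' i) i, del1 R'' i, del1 W'' i)"
proof -
  note len = well_formedD(1-4)[OF wf] and clean = well_formedD(5)[OF wf]
  have "cell_wf ieval (nth1 (del1 C i) j) (nth1 (del1 Out i) j) \<Sigma> (del1 R'' i) (del1 W'' i) j"
    if j: "1 \<le> j" "j \<le> length C - 1"
      and clean_j: "nth1 (del1 (retag T R W W'' i) i) j = Clean" for j
  proof -
    let ?k = "ins_pos i j"
    have k: "1 \<le> ?k" "?k \<le> length C" "?k \<noteq> i" using i j by (auto simp: ins_pos_def)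
    have "nth1 (retag T R W W'' i) ?k = Clean" using clean_j i j len by (simp add: nth1_del1)
    then have "\<not> forward_stale R W W'' i ?k" "\<not> backward_stale W W'' i ?k" "nth1 T ?k = Clean"
      using k len by (simp_all add: nth1_retag split: if_splits)
    then have "cell_wf ieval (nth1 C ?k) (nth1 Out ?k) \<Sigma> R'' W'' ?k"
      unfolding R''_def W''_def
      by (intro cell_wf_upd1[OF ie clean[OF k(1,2)]]) (use i k len in auto)
    then show ?thesis
      using i j len by (simp add: nth1_del1 R''_def W''_def nth1_upd1 cell_wf_del1_iff)
  qed
  then show ?thesis using i len by (simp add: well_formed_iff R''_def W''_def)
qed

lemma well_formed_run:
  assumes ie: "instrumented_eval eval ieval"
    and wf: "well_formed ieval (C, Out, \<Sigma>) (T, R, W)" and i: "1 \<le> i" "i \<le> length C"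
    and ev: "ieval (nth1 C i) \<Sigma> out \<Sigma>' r w"
    and rc: "rerun_consistent (upd1 R i r) (upd1 W i w) i"
  shows "well_formed ieval (C, upd1 Out i out, \<Sigma>')
    (upd1 (retag T R W (upd1 W i w) i) i Clean, upd1 R i r, upd1 W i w)"
proof -
  note len = well_formedD(1-4)[OF wf] and clean = well_formedD(5)[OF wf]
  have read_above: "r \<inter> Un_range W (i + 1) (length W) = {}"
    and write_below: "w \<inter> Un_range R 1 (i - 1) = {}"
    using rc i len by (simp_all add: rerun_consistent_def nth1_upd1 Un_range_upd1_outside)
  have "cell_wf ieval (nth1 C j) (nth1 (upd1 Out i out) j) \<Sigma>' (upd1 R i r) (upd1 W i w) j"
    if j: "1 \<le> j" "j \<le> length C"
      and clean_j: "nth1 (upd1 (retag T R W (upd1 W i w) i) i Clean) j = Clean" for j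
  proof (cases "j = i")
    case True
    then show ?thesis
      using ie ev rc i len by (simp add: nth1_upd1 cell_wf_rerun)
  next
    case False
    have "\<not> forward_stale R W (upd1 W i w) i j" "\<not> backward_stale W (upd1 W i w) i j"
      "nth1 T j = Clean"
      using clean_j False i j len by (simp_all add: nth1_upd1 nth1_retag split: if_splits)
    then have "cell_wf ieval (nth1 C j) (nth1 Out j) \<Sigma>' (upd1 R i r) (upd1 W i w) j"
      by (intro cell_wf_upd1[OF ie clean[OF j]])
        (use False i j len read_above write_below instrumented_eval_frame[OF ie, OF ev] in auto)
    then show ?thesis using False i j len by (simp add: nth1_upd1)
  qed
  then show ?thesis using len by (simp add: well_formed_iff)
qed

theorem theorem1:
  fixes eval :: "'c \<Rightarrow> ('l \<Rightarrow> 'v) \<Rightarrow> 'o \<Rightarrow> ('l \<Rightarrow> 'v) \<Rightarrow> bool"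
    and ieval :: "'c \<Rightarrow> ('l \<Rightarrow> 'v) \<Rightarrow> 'o \<Rightarrow> ('l \<Rightarrow> 'v) \<Rightarrow> 'l set \<Rightarrow> 'l set \<Rightarrow> bool"
    and bot :: 'o
    and op :: "'c nbop"
    and S S' :: "('c, 'o, 'l, 'v) nbstate"
    and I I' :: "'l instr"
  assumes "instrumented_eval eval ieval"
    and "well_formed ieval S I"
    and "nb_step ieval bot op S I S' I'"
  shows "well_formed ieval S' I'"
  using assms(3,2)
proof (induction rule: nb_step.induct)
  case step_run
  then show ?case by (simp add: well_formed_run[OF assms(1)])
next
  case step_edit
  then show ?case by (simp add: well_formed_edit)
next
  case step_insert
  then show ?case by (simp add: well_formed_insert)
next
  case step_delete
  then show ?case by (simp add: well_formed_delete[OF assms(1)])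
qed blast+

end
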